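(* Let $n$ be a positive integer and suppose there exist two mutually orthogonal latin squares of order $n$ that have a common transversal. Let $\rho$ be an integer with $1 \le \rho \le n$. Then there exists a $(3n+\rho,4)$-packing with exactly $n\rho + D(\rho,4)$ blocks in which the largest partial parallel class has size $\rho$.
   Context: For integers $v \ge k \ge 2$, a $(v,k)$-packing is a pair $(X,\mathcal{B})$ where $X$ is a set of $v$ points and $\mathcal{B}$ is a set of $k$-subsets of $X$ (blocks) such that every pair of distinct points lies in at most one block. For integers $m \ge 0$, $D(m,k)$ denotes the maximum number of $k$-subsets of an $m$-set such that every pair of points lies in at most one of them (so $D(m,k)=0$ if $m<k$). A partial parallel class (PPC) is a set of pairwise disjoint blocks; its size is the number of blocks. "The largest PPC has size $\rho$" means the packing has a PPC of size $\rho$ but none of size $\rho+1$. A transversal of a latin square of order $n$ is a set of $n$ cells, one in each row and each column, containing $n$ distinct symbols; a common transversal of several latin squares is a set of cells that is a transversal of each of them. *)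

theory Defs
  imports Main
begin

definition latin_square :: "nat \<Rightarrow> (nat \<Rightarrow> nat \<Rightarrow> nat) \<Rightarrow> bool" where
  "latin_square n L \<longleftrightarrow>
     (\<forall>i<n. \<forall>j<n. L i j < n) \<and>
     (\<forall>i<n. inj_on (\<lambda>j. L i j) {0..<n}) \<and>
     (\<forall>j<n. inj_on (\<lambda>i. L i j) {0..<n})"

definition orthogonal_ls :: "nat \<Rightarrow> (nat \<Rightarrow> nat \<Rightarrow> nat) \<Rightarrow> (nat \<Rightarrow> nat \<Rightarrow> nat) \<Rightarrow> bool" where
  "orthogonal_ls n L1 L2 \<longleftrightarrow>
     inj_on (\<lambda>(i, j). (L1 i j, L2 i j)) ({0..<n} \<times> {0..<n})"

definition MOLS2 :: "nat \<Rightarrow> (nat \<Rightarrow> nat \<Rightarrow> nat) \<Rightarrow> (nat \<Rightarrow> nat \<Rightarrow> nat) \<Rightarrow> bool" where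
  "MOLS2 n L1 L2 \<longleftrightarrow> latin_square n L1 \<and> latin_square n L2 \<and> orthogonal_ls n L1 L2"

definition transversal :: "nat \<Rightarrow> (nat \<Rightarrow> nat \<Rightarrow> nat) \<Rightarrow> (nat \<times> nat) set \<Rightarrow> bool" where
  "transversal n L T \<longleftrightarrow>
     T \<subseteq> {0..<n} \<times> {0..<n} \<and> card T = n \<and>
     (\<forall>i<n. \<exists>!j. (i, j) \<in> T) \<and>
     (\<forall>j<n. \<exists>!i. (i, j) \<in> T) \<and>
     card ((\<lambda>(i, j). L i j) ` T) = n"

definition packing :: "'a set \<Rightarrow> nat \<Rightarrow> 'a set set \<Rightarrow> bool" where
  "packing X k B \<longleftrightarrow> finite X \<and>
     (\<forall>b\<in>B. b \<subseteq> X \<and> card b = k) \<and>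
     (\<forall>x y. x \<noteq> y \<longrightarrow> card {b \<in> B. x \<in> b \<and> y \<in> b} \<le> 1)"

definition D :: "nat \<Rightarrow> nat \<Rightarrow> nat" where
  "D m k = Max {card B | B. packing ({0..<m} :: nat set) k B}"

definition PPC :: "'a set set \<Rightarrow> 'a set set \<Rightarrow> bool" where
  "PPC B P \<longleftrightarrow> P \<subseteq> B \<and> (\<forall>b\<in>P. \<forall>c\<in>P. b \<noteq> c \<longrightarrow> b \<inter> c = {})"

definition largest_PPC_size :: "'a set set \<Rightarrow> nat \<Rightarrow> bool" where
  "largest_PPC_size B r \<longleftrightarrow>
     (\<exists>P. PPC B P \<and> card P = r) \<and> \<not> (\<exists>P. PPC B P \<and> card P = r + 1)"

end

theory Submission
  imports Defs
begin

text \<open>Two MOLS of order n form an orthogonal array OA(4, n): the rows (r, i, L1 r i, L2 r i) agree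
  pairwise in at most one coordinate. Placing each coordinate in its own group of points gives a
  transversal design TD(4, n); keep only the n \<rho> blocks through the first \<rho> points of the row
  group. These \<rho> points form a hole met by every block in exactly one point, so the hole can be
  filled with a maximum (\<rho>, 4)-packing, giving n \<rho> + D(\<rho>, 4) blocks. Since every block meets
  the hole, a partial parallel class has at most \<rho> blocks, and the common transversal,
  restricted to the first \<rho> rows, supplies \<rho> pairwise disjoint blocks.\<close>

lemma packing_iff_pairwise_inter:
  "packing X k B \<longleftrightarrow> finite X \<and> (\<forall>b\<in>B. b \<subseteq> X \<and> card b = k) \<and>
     (\<forall>b\<in>B. \<forall>c\<in>B. b \<noteq> c \<longrightarrow> card (b \<inter> c) \<le> 1)"
proof (cases "finite X \<and> (\<forall>b\<in>B. b \<subseteq> X \<and> card b = k)")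
  case True
  then have "finite B" and "\<And>b. b \<in> B \<Longrightarrow> finite b"
    by (auto intro: finite_subset[of B "Pow X"] finite_subset)
  then have "(\<forall>x y. x \<noteq> y \<longrightarrow> card {b \<in> B. x \<in> b \<and> y \<in> b} \<le> 1) \<longleftrightarrow>
             (\<forall>b\<in>B. \<forall>c\<in>B. b \<noteq> c \<longrightarrow> card (b \<inter> c) \<le> 1)"
    by (auto simp: card_le_Suc0_iff_eq) blast+
  with True show ?thesis
    unfolding packing_def by blast
qed (auto simp: packing_def)

lemma packing_Un:
  assumes "packing X k A" and "packing Y k B" and "finite Z" and "X \<subseteq> Z" and "Y \<subseteq> Z"
    and cross: "\<And>a b. a \<in> A \<Longrightarrow> b \<in> B \<Longrightarrow> card (a \<inter> b) \<le> 1"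
  shows "packing Z k (A \<union> B)"
proof -
  have "\<forall>b\<in>A. b \<subseteq> X \<and> card b = k" "\<forall>b\<in>B. b \<subseteq> Y \<and> card b = k"
    and inner: "\<forall>b\<in>A. \<forall>c\<in>A. b \<noteq> c \<longrightarrow> card (b \<inter> c) \<le> 1"
      "\<forall>b\<in>B. \<forall>c\<in>B. b \<noteq> c \<longrightarrow> card (b \<inter> c) \<le> 1"
    using assms(1,2) unfolding packing_iff_pairwise_inter by simp_all
  with \<open>X \<subseteq> Z\<close> \<open>Y \<subseteq> Z\<close> have "\<forall>b\<in>A \<union> B. b \<subseteq> Z \<and> card b = k"
    by blast
  moreover have "card (b \<inter> c) \<le> 1" if "b \<in> A \<union> B" "c \<in> A \<union> B" "b \<noteq> c" for b c
    using that inner cross[of b c] cross[of c b] by (auto simp: Int_commute)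
  ultimately show ?thesis
    using \<open>finite Z\<close> unfolding packing_iff_pairwise_inter by blast
qed

lemma packing_finite: "packing X k B \<Longrightarrow> finite B"
  unfolding packing_def by (auto intro: finite_subset[of B "Pow X"])

lemma D_attained:
  obtains B where "packing {0..<m} k B" "card B = D m k"
proof -
  let ?S = "{card B | B. packing ({0..<m} :: nat set) k B}"
  have "?S \<subseteq> card ` Pow (Pow {0..<m})"
    unfolding packing_def by auto
  then have "finite ?S"
    by (rule finite_subset) simp
  moreover have "packing {0..<m} k {}"
    unfolding packing_def by simp
  then have "?S \<noteq> {}"
    by blast
  ultimately have "D m k \<in> ?S"
    unfolding D_def by (rule Max_in)
  with that show ?thesis
    by auto
qed

lemma PPC_card_le:
  assumes "PPC B P" and "finite S" and meets: "\<And>b. b \<in> B \<Longrightarrow> b \<inter> S \<noteq> {}"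
  shows "card P \<le> card S"
proof (rule card_le_if_inj_on_rel[where r = "\<lambda>b x. x \<in> b"])
  have "P \<subseteq> B" and disjoint: "\<And>b c. b \<in> P \<Longrightarrow> c \<in> P \<Longrightarrow> b \<noteq> c \<Longrightarrow> b \<inter> c = {}"
    using assms(1) unfolding PPC_def by auto
  show "\<exists>x. x \<in> S \<and> x \<in> b" if "b \<in> P" for b
    using meets[of b] \<open>P \<subseteq> B\<close> that by auto
  show "b = c" if "b \<in> P" "c \<in> P" "x \<in> b" "x \<in> c" for b c x
    using disjoint[of b c] that by auto
qed (fact assms(2))

lemma latin_square_less:
  assumes "latin_square n L" "i < n" "j < n"
  shows "L i j < n"
  using assms unfolding latin_square_def by simp

lemma latin_square_row_eqD:
  assumes "latin_square n L" "i < n" "j < n" "j' < n" "L i j = L i j'"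
  shows "j = j'"
  using assms inj_onD[of "\<lambda>j. L i j" "{0..<n}" j j'] unfolding latin_square_def by simp

lemma latin_square_col_eqD:
  assumes "latin_square n L" "i < n" "i' < n" "j < n" "L i j = L i' j"
  shows "i = i'"
  using assms inj_onD[of "\<lambda>i. L i j" "{0..<n}" i i'] unfolding latin_square_def by simp

lemma orthogonal_ls_eqD:
  assumes "orthogonal_ls n L1 L2" "i < n" "j < n" "i' < n" "j' < n"
    and "L1 i j = L1 i' j'" "L2 i j = L2 i' j'"
  shows "i = i' \<and> j = j'"
  using assms inj_onD[of "\<lambda>(i, j). (L1 i j, L2 i j)" "{0..<n} \<times> {0..<n}" "(i, j)" "(i', j')"]
  unfolding orthogonal_ls_def by simp

definition oa_row :: "(nat \<Rightarrow> nat \<Rightarrow> nat) \<Rightarrow> (nat \<Rightarrow> nat \<Rightarrow> nat) \<Rightarrow> nat \<Rightarrow> nat \<Rightarrow> nat list" where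
  "oa_row L1 L2 r i = [r, i, L1 r i, L2 r i]"

lemma MOLS2_oa_rows_agree_at_most_once:
  assumes "MOLS2 n L1 L2" "r < n" "i < n" "r' < n" "i' < n"
    and "k < 4" "l < 4" "k \<noteq> l"
    and "oa_row L1 L2 r i ! k = oa_row L1 L2 r' i' ! k"
    and "oa_row L1 L2 r i ! l = oa_row L1 L2 r' i' ! l"
  shows "r = r' \<and> i = i'"
proof -
  have L1: "latin_square n L1" and L2: "latin_square n L2" and orth: "orthogonal_ls n L1 L2"
    using assms(1) unfolding MOLS2_def by simp_all
  have "r = r' \<and> i = i'" if "k < l" "l < 4"
      "oa_row L1 L2 r i ! k = oa_row L1 L2 r' i' ! k"
      "oa_row L1 L2 r i ! l = oa_row L1 L2 r' i' ! l" for k l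
  proof -
    from that(1,2) consider "k = 0" "l = 1" | "k = 0" "l = 2" | "k = 0" "l = 3"
      | "k = 1" "l = 2" | "k = 1" "l = 3" | "k = 2" "l = 3"
      by linarith
    then show ?thesis
    proof cases
      case 1
      with that(3,4) show ?thesis by (simp add: oa_row_def)
    next
      case 2
      with that(3,4) assms(2-5) show ?thesis
        by (simp add: oa_row_def latin_square_row_eqD[OF L1])
    next
      case 3
      with that(3,4) assms(2-5) show ?thesis
        by (simp add: oa_row_def latin_square_row_eqD[OF L2])
    next
      case 4
      with that(3,4) assms(2-5) show ?thesis
        by (simp add: oa_row_def latin_square_col_eqD[OF L1])
    next
      case 5
      with that(3,4) assms(2-5) show ?thesis
        by (simp add: oa_row_def latin_square_col_eqD[OF L2])
    next
      case 6
      with that(3,4) assms(2-5) show ?thesis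
        by (simp add: oa_row_def orthogonal_ls_eqD[OF orth])
    qed
  qed
  with assms(6-10) show ?thesis
    by (cases k l rule: linorder_cases) auto
qed

lemma transversal_cells_differ:
  assumes "transversal n L T" "(r, j) \<in> T" "(r', j') \<in> T" "(r, j) \<noteq> (r', j')"
  shows "r \<noteq> r' \<and> j \<noteq> j' \<and> L r j \<noteq> L r' j'"
proof -
  have sub: "T \<subseteq> {0..<n} \<times> {0..<n}" and "card T = n"
    and rows: "\<forall>i<n. \<exists>!j. (i, j) \<in> T" and cols: "\<forall>j<n. \<exists>!i. (i, j) \<in> T"
    and "card ((\<lambda>(i, j). L i j) ` T) = n"
    using assms(1) unfolding transversal_def by simp_all
  moreover have "finite T"
    using sub by (rule finite_subset) simp
  ultimately have "inj_on (\<lambda>(i, j). L i j) T"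
    by (simp add: eq_card_imp_inj_on)
  moreover have "r < n" "j < n" "r' < n" "j' < n"
    using sub assms(2,3) by auto
  ultimately show ?thesis
    using assms(2-4) rows cols inj_onD[of "\<lambda>(i, j). L i j" T "(r, j)" "(r', j')"] by auto
qed

text \<open>Point number v of group k: group 0 is the hole {0..<p}, groups 1, 2, 3 are the
  consecutive intervals of length n that follow it.\<close>
definition group_point :: "nat \<Rightarrow> nat \<Rightarrow> nat \<Rightarrow> nat \<Rightarrow> nat" where
  "group_point p n k v = (if k = 0 then v else p + (k - 1) * n + v)"

lemma group_point_eq_iff:
  assumes "k < 4" "k' < 4" "v < (if k = 0 then p else n)" "v' < (if k' = 0 then p else n)"
  shows "group_point p n k v = group_point p n k' v' \<longleftrightarrow> k = k' \<and> v = v'"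
proof -
  have "k \<in> {0, 1, 2, 3}" "k' \<in> {0, 1, 2, 3}"
    using assms(1,2) by auto
  with assms(3,4) show ?thesis
    unfolding group_point_def by auto
qed

lemma group_point_less:
  assumes "k < 4" "v < (if k = 0 then p else n)"
  shows "group_point p n k v < p + 3 * n"
proof -
  have "k \<in> {0, 1, 2, 3}"
    using assms(1) by auto
  with assms(2) show ?thesis
    unfolding group_point_def by auto
qed

definition td_block ::
    "nat \<Rightarrow> nat \<Rightarrow> (nat \<Rightarrow> nat \<Rightarrow> nat) \<Rightarrow> (nat \<Rightarrow> nat \<Rightarrow> nat) \<Rightarrow> nat \<Rightarrow> nat \<Rightarrow> nat set" where
  "td_block p n L1 L2 r i = (\<lambda>k. group_point p n k (oa_row L1 L2 r i ! k)) ` {0..<4}"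

definition td_blocks ::
    "nat \<Rightarrow> nat \<Rightarrow> (nat \<Rightarrow> nat \<Rightarrow> nat) \<Rightarrow> (nat \<Rightarrow> nat \<Rightarrow> nat) \<Rightarrow> nat set set" where
  "td_blocks p n L1 L2 = (\<lambda>(r, i). td_block p n L1 L2 r i) ` ({0..<p} \<times> {0..<n})"

lemma td_block_eq:
  "td_block p n L1 L2 r i = {r, p + i, p + n + L1 r i, p + 2 * n + L2 r i}"
proof -
  have "{0..<4::nat} = {0, 1, 2, 3}"
    by auto
  then show ?thesis
    unfolding td_block_def group_point_def oa_row_def by (simp add: insert_commute)
qed

lemma finite_td_block [simp]: "finite (td_block p n L1 L2 r i)"
  by (simp add: td_block_eq)

context
  fixes n p :: nat and L1 L2 :: "nat \<Rightarrow> nat \<Rightarrow> nat"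
  assumes mols: "MOLS2 n L1 L2" and p_le_n: "p \<le> n"
begin

lemma oa_row_nth_less:
  assumes "r < p" "i < n" "k < 4"
  shows "oa_row L1 L2 r i ! k < (if k = 0 then p else n)"
proof -
  have "k \<in> {0, 1, 2, 3}"
    using assms(3) by auto
  moreover have "L1 r i < n" "L2 r i < n"
    using mols assms(1,2) p_le_n by (simp_all add: MOLS2_def latin_square_less)
  ultimately show ?thesis
    using assms(1,2) unfolding oa_row_def by auto
qed

lemma td_block_subset:
  assumes "r < p" "i < n"
  shows "td_block p n L1 L2 r i \<subseteq> {0..<p + 3 * n}"
  using group_point_less oa_row_nth_less[OF assms] unfolding td_block_def by auto

lemma card_td_block:
  assumes "r < p" "i < n"
  shows "card (td_block p n L1 L2 r i) = 4"
proof -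
  have "inj_on (\<lambda>k. group_point p n k (oa_row L1 L2 r i ! k)) {0..<4}"
    by (rule inj_onI) (simp add: group_point_eq_iff oa_row_nth_less[OF assms])
  then show ?thesis
    unfolding td_block_def by (simp add: card_image)
qed

lemma td_block_Int_iff:
  assumes "r < p" "i < n" "r' < p" "i' < n"
  shows "x \<in> td_block p n L1 L2 r i \<inter> td_block p n L1 L2 r' i' \<longleftrightarrow>
    (\<exists>k<4. oa_row L1 L2 r i ! k = oa_row L1 L2 r' i' ! k \<and>
       x = group_point p n k (oa_row L1 L2 r i ! k))"
  using oa_row_nth_less[OF assms(1,2)] oa_row_nth_less[OF assms(3,4)]
  unfolding td_block_def by (auto simp: group_point_eq_iff)

lemma card_td_block_Int_le_1:
  assumes "r < p" "i < n" "r' < p" "i' < n" "(r, i) \<noteq> (r', i')"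
  shows "card (td_block p n L1 L2 r i \<inter> td_block p n L1 L2 r' i') \<le> 1"
proof -
  have "x = y" if common: "x \<in> td_block p n L1 L2 r i \<inter> td_block p n L1 L2 r' i'"
      "y \<in> td_block p n L1 L2 r i \<inter> td_block p n L1 L2 r' i'" for x y
  proof -
    obtain k l where "k < 4" "l < 4"
      and "oa_row L1 L2 r i ! k = oa_row L1 L2 r' i' ! k" "x = group_point p n k (oa_row L1 L2 r i ! k)"
      and "oa_row L1 L2 r i ! l = oa_row L1 L2 r' i' ! l" "y = group_point p n l (oa_row L1 L2 r i ! l)"
      using common td_block_Int_iff[OF assms(1-4)] by meson
    moreover have "r < n" "r' < n"
      using assms(1,3) p_le_n by simp_all
    ultimately show "x = y"
      using MOLS2_oa_rows_agree_at_most_once[OF mols _ assms(2) _ assms(4)] assms(5) by blast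
  qed
  then show ?thesis
    by (simp add: card_le_Suc0_iff_eq)
qed

lemma td_block_Int_hole:
  assumes "r < p"
  shows "td_block p n L1 L2 r i \<inter> {0..<p} = {r}"
  using assms unfolding td_block_eq by auto

lemma td_blocks_packing: "packing {0..<p + 3 * n} 4 (td_blocks p n L1 L2)"
proof -
  have "b \<subseteq> {0..<p + 3 * n} \<and> card b = 4" if "b \<in> td_blocks p n L1 L2" for b
    using that unfolding td_blocks_def by (clarsimp simp: td_block_subset card_td_block)
  moreover have "card (b \<inter> c) \<le> 1"
    if blocks: "b \<in> td_blocks p n L1 L2" "c \<in> td_blocks p n L1 L2" and "b \<noteq> c" for b c
  proof -
    obtain r i r' i' where "r < p" "i < n" "r' < p" "i' < n"
      and "b = td_block p n L1 L2 r i" "c = td_block p n L1 L2 r' i'"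
      using blocks unfolding td_blocks_def by auto
    with \<open>b \<noteq> c\<close> show ?thesis
      using card_td_block_Int_le_1 by blast
  qed
  ultimately show ?thesis
    unfolding packing_iff_pairwise_inter by blast
qed

lemma card_td_blocks: "card (td_blocks p n L1 L2) = p * n"
proof -
  have "inj_on (\<lambda>(r, i). td_block p n L1 L2 r i) ({0..<p} \<times> {0..<n})"
  proof (rule inj_onI, clarsimp)
    fix r i r' i' assume "r < p" "i < n" "r' < p" "i' < n"
      and same: "td_block p n L1 L2 r i = td_block p n L1 L2 r' i'"
    then show "r = r' \<and> i = i'"
      using card_td_block_Int_le_1 card_td_block by fastforce
  qed
  then show ?thesis
    unfolding td_blocks_def by (simp add: card_image)
qed

lemma td_blocks_PPC:
  assumes "transversal n L1 T" "transversal n L2 T"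
  shows "\<exists>P. PPC (td_blocks p n L1 L2) P \<and> card P = p"
proof -
  have "\<forall>r<n. \<exists>j. (r, j) \<in> T" and sub: "T \<subseteq> {0..<n} \<times> {0..<n}"
    using assms(1) unfolding transversal_def by auto
  then obtain t where t: "\<And>r. r < n \<Longrightarrow> (r, t r) \<in> T"
    by metis
  have t_less: "t r < n" if "r < p" for r
    using t[of r] sub that p_le_n by auto
  have disjoint: "td_block p n L1 L2 r (t r) \<inter> td_block p n L1 L2 r' (t r') = {}"
    if "r < p" "r' < p" "r \<noteq> r'" for r r'
  proof -
    have cells: "(r, t r) \<in> T" "(r', t r') \<in> T" "(r, t r) \<noteq> (r', t r')"
      using that t p_le_n by auto
    have "oa_row L1 L2 r (t r) ! k \<noteq> oa_row L1 L2 r' (t r') ! k" if "k < 4" for k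
    proof -
      have "k \<in> {0, 1, 2, 3}"
        using that by auto
      then show ?thesis
        using transversal_cells_differ[OF assms(1) cells] transversal_cells_differ[OF assms(2) cells]
        unfolding oa_row_def by auto
    qed
    then show ?thesis
      using td_block_Int_iff[OF that(1) t_less[OF that(1)] that(2) t_less[OF that(2)]] by blast
  qed
  define P where "P = (\<lambda>r. td_block p n L1 L2 r (t r)) ` {0..<p}"
  have "PPC (td_blocks p n L1 L2) P"
    unfolding PPC_def P_def td_blocks_def using t_less disjoint by fastforce
  moreover have "inj_on (\<lambda>r. td_block p n L1 L2 r (t r)) {0..<p}"
  proof (rule inj_onI)
    fix r r' assume "r \<in> {0..<p}" "r' \<in> {0..<p}" "td_block p n L1 L2 r (t r) = td_block p n L1 L2 r' (t r')"
    then show "r = r'"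
      using disjoint card_td_block[of r "t r"] t_less by fastforce
  qed
  then have "card P = p"
    unfolding P_def by (simp add: card_image)
  ultimately show ?thesis
    by blast
qed

lemma packing_fill_hole:
  assumes "packing {0..<p} 4 B0"
  shows "packing {0..<p + 3 * n} 4 (B0 \<union> td_blocks p n L1 L2)"
proof (rule packing_Un[OF assms td_blocks_packing])
  fix a b assume "a \<in> B0" "b \<in> td_blocks p n L1 L2"
  then obtain r i where "r < p" "b = td_block p n L1 L2 r i" and "a \<subseteq> {0..<p}"
    using assms unfolding td_blocks_def packing_def by auto
  then have "a \<inter> b \<subseteq> {r}"
    using td_block_Int_hole by blast
  then show "card (a \<inter> b) \<le> 1"
    using card_mono[of "{r}"] by fastforce
qed auto

lemma card_fill_hole:
  assumes "packing {0..<p} 4 B0"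
  shows "card (B0 \<union> td_blocks p n L1 L2) = card B0 + p * n"
proof -
  have "b \<notin> B0" if b: "b \<in> td_blocks p n L1 L2" for b
  proof
    assume "b \<in> B0"
    with assms have "b \<subseteq> {0..<p}" "card b = 4"
      unfolding packing_def by auto
    moreover obtain r i where "r < p" "b = td_block p n L1 L2 r i"
      using b unfolding td_blocks_def by auto
    ultimately have "b = {r}"
      using td_block_Int_hole by (metis Int_absorb2)
    with \<open>card b = 4\<close> show False
      by simp
  qed
  then have "B0 \<inter> td_blocks p n L1 L2 = {}"
    by blast
  moreover have "finite (td_blocks p n L1 L2)"
    using packing_finite[OF td_blocks_packing] .
  ultimately show ?thesis
    using card_Un_disjoint[OF packing_finite[OF assms]] card_td_blocks by simp
qed

lemma largest_PPC_size_fill_hole: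
  assumes "packing {0..<p} 4 B0" "transversal n L1 T" "transversal n L2 T"
  shows "largest_PPC_size (B0 \<union> td_blocks p n L1 L2) p"
proof -
  have "b \<inter> {0..<p} \<noteq> {}" if "b \<in> B0 \<union> td_blocks p n L1 L2" for b
  proof (cases "b \<in> B0")
    case True
    with assms(1) have "b \<subseteq> {0..<p}" "card b = 4"
      unfolding packing_def by auto
    then show ?thesis
      by (auto simp: Int_absorb2)
  next
    case False
    with that obtain r i where "r < p" "b = td_block p n L1 L2 r i"
      unfolding td_blocks_def by auto
    then show ?thesis
      using td_block_Int_hole by simp
  qed
  then have "\<not> (\<exists>P. PPC (B0 \<union> td_blocks p n L1 L2) P \<and> card P = p + 1)"
    using PPC_card_le[of "B0 \<union> td_blocks p n L1 L2" _ "{0..<p}"] by fastforce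
  moreover obtain P where "PPC (td_blocks p n L1 L2) P" "card P = p"
    using td_blocks_PPC[OF assms(2,3)] by blast
  then have "PPC (B0 \<union> td_blocks p n L1 L2) P"
    unfolding PPC_def by blast
  ultimately show ?thesis
    unfolding largest_PPC_size_def using \<open>card P = p\<close> by blast
qed

end

theorem theorem2p4:
  fixes n \<rho> :: nat and L1 L2 :: "nat \<Rightarrow> nat \<Rightarrow> nat" and T :: "(nat \<times> nat) set"
  assumes "n \<ge> 1"
    and "MOLS2 n L1 L2"
    and "transversal n L1 T" and "transversal n L2 T"
    and "1 \<le> \<rho>" and "\<rho> \<le> n"
  shows "\<exists>(X :: nat set) B. card X = 3 * n + \<rho> \<and> packing X 4 B \<and>
           card B = n * \<rho> + D \<rho> 4 \<and> largest_PPC_size B \<rho>"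
proof -
  \<comment> \<open>The construction works for \<open>\<rho> = 0\<close> as well.\<close>
  obtain B0 where B0: "packing {0..<\<rho>} 4 B0" "card B0 = D \<rho> 4"
    using D_attained .
  let ?B = "B0 \<union> td_blocks \<rho> n L1 L2"
  have "packing {0..<\<rho> + 3 * n} 4 ?B"
    using packing_fill_hole[OF assms(2,6) B0(1)] .
  moreover have "card ?B = n * \<rho> + D \<rho> 4"
    using card_fill_hole[OF assms(2,6) B0(1)] B0(2) by simp
  moreover have "largest_PPC_size ?B \<rho>"
    using largest_PPC_size_fill_hole[OF assms(2,6) B0(1) assms(3,4)] .
  moreover have "card {0..<\<rho> + 3 * n} = 3 * n + \<rho>"
    by simp
  ultimately show ?thesis
    by blast
qed

end
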